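(* Let $\mathbf{H}\in\mathbb{R}^{m\times n}$ have full column rank, rows indexed by sensors and columns by state variables. Let $\mathcal{S}_o\subseteq\{1,\dots,m\}$, $\mathbf{H}_o$ the submatrix of rows of $\mathbf{H}$ indexed by $\mathcal{S}_o$, and $\mathcal{X}_o$ the set of indices of nonzero columns of $\mathbf{H}_o$. Suppose that (i) the state variables in $\mathcal{X}_o$ are observable with respect to $\mathcal{S}_o$; (ii) $\mathcal{C}\subseteq\mathcal{S}_o$ is a critical set with respect to $(\mathcal{S}_o,\mathcal{X}_o)$; (iii) the submatrix of $\mathbf{H}$ obtained by removing the rows in $\mathcal{C}$ does not have full column rank. Let $\{\mathcal{C}_1,\mathcal{C}_2\}$ be an arbitrary partition of $\mathcal{C}$. Let $\mathbf{H}_A$ be the submatrix of $\mathbf{H}$ consisting of rows indexed by $\mathcal{S}_o\setminus\mathcal{C}_2$, $\mathbf{U}_A\in\mathbb{R}^{|\mathcal{S}_o\setminus\mathcal{C}_2|\times|\mathcal{X}_o|}$ a matrix whose columns form a basis of $\mathcal{R}(\mathbf{H}_A)$, and $\bar{\mathbf{U}}_A$ the submatrix of $\mathbf{U}_A$ obtained by removing the rows corresponding to sensors in $\mathcal{C}_1$. Then: (1) $\mathcal{N}(\bar{\mathbf{U}}_A)$ has dimension one; (2) for any nonzero $\mathbf{v}\in\mathcal{N}(\bar{\mathbf{U}}_A)$, the vector $\mathbf{a}\in\mathbb{R}^m$ with $a_i$ equal to the entry of $\mathbf{U}_A\mathbf{v}$ corresponding to sensor $i$ for $i\in\mathcal{C}_1$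 and $a_i=0$ otherwise satisfies $\mathbf{a}=\alpha\mathbf{a}^*$ for some nonzero $\alpha\in\mathbb{R}$, where $\mathbf{a}^*$ is an optimal solution of the problem (P1) in the context with $\mathcal{S}_A=\mathcal{C}_1$ and $\mathcal{S}_F=\mathcal{C}_2$.
   Context: Observability/critical sets: for a sensor set $\mathcal{S}$ and variables $\mathcal{X}$, with $\mathbf{H}_{\mathcal{S}}$ the rows of $\mathbf{H}$ in $\mathcal{S}$, the variables in $\mathcal{X}$ are observable with respect to $\mathcal{S}$ if every vector of $\mathcal{N}(\mathbf{H}_{\mathcal{S}})$ vanishes on $\mathcal{X}$; when so, $\mathcal{C}\subseteq\mathcal{S}$ is critical w.r.t. $(\mathcal{S},\mathcal{X})$ if the variables in $\mathcal{X}$ are not observable w.r.t. $\mathcal{S}\setminus\mathcal{C}$ but are observable w.r.t. $\mathcal{S}\setminus\mathcal{C}'$ for every strict subset $\mathcal{C}'\subsetneq\mathcal{C}$. Problem (P1): model $\mathbf{z}=\mathbf{H}\mathbf{x}+\mathbf{e}$, fixed $\mathbf{x}$, $\mathbf{e}\sim\mathcal{N}(\mathbf{0},\sigma^2\mathbf{I})$; $\mathcal{A}=\{\mathbf{a}: a_i=0\ \forall i\notin\mathcal{S}_A\}$; $\mathbf{W}=\mathbf{I}-\mathbf{H}(\mathbf{H}^T\mathbf{H})^{-1}\mathbf{H}^T$; normalized residue $\tilde{\mathbf{r}}=\mathbf{\Omega}\mathbf{W}(\mathbf{z}+\mathbf{a})$ with $\mathbf{\Omega}$ diagonal, $\mathbf{\Omega}_{ii}=0$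 if removing row $i$ from $\mathbf{H}$ makes it lose full column rank and $\mathbf{\Omega}_{ii}=1/\sqrt{\sigma^2\mathbf{W}_{ii}}$ otherwise; $\mathbf{H}_1$ is $\mathbf{H}$ with rows in $\mathcal{S}_F$ replaced by zero rows. (P1) is: maximize $\mathbb{E}_{\mathbf{e}}\big[\sum_{i\in\mathcal{S}_F}\tilde r_i^2\big]$ over $\mathbf{a}$ subject to $\|\mathbf{a}\|_2^2=1$ and $\mathbf{a}\in\mathcal{R}(\mathbf{H}_1)\cap\mathcal{A}$. *)

theory Defs
  imports "HOL-Probability.Probability"
begin

(* A row-submatrix H_S is represented by H with all rows outside S replaced by zero rows
   (same null space, same rank, range identified with vectors supported on S). *)
definition rowsel :: "'m set \<Rightarrow> real^'n^'m \<Rightarrow> real^'n^'m" where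
  "rowsel S H = (\<chi> i. if i \<in> S then H $ i else 0)"

definition nullsp :: "real^'n^'m \<Rightarrow> 'm set \<Rightarrow> (real^'n) set" where
  "nullsp H S = {x. \<forall>i\<in>S. (H *v x) $ i = 0}"

definition observable :: "real^'n^'m \<Rightarrow> 'm set \<Rightarrow> 'n set \<Rightarrow> bool" where
  "observable H S X \<longleftrightarrow> (\<forall>x\<in>nullsp H S. \<forall>j\<in>X. x $ j = 0)"

definition critical :: "real^'n^'m \<Rightarrow> 'm set \<Rightarrow> 'n set \<Rightarrow> 'm set \<Rightarrow> bool" where
  "critical H S X C \<longleftrightarrow> C \<subseteq> S \<and> \<not> observable H (S - C) X \<and>
      (\<forall>C'. C' \<subset> C \<longrightarrow> observable H (S - C') X)"

definition nzcols :: "real^'n^'m \<Rightarrow> 'm set \<Rightarrow> 'n set" where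
  "nzcols H S = {j. \<exists>i\<in>S. H $ i $ j \<noteq> 0}"

definition full_col_rank :: "real^'n^'m \<Rightarrow> bool" where
  "full_col_rank H \<longleftrightarrow> rank H = CARD('n)"

definition Wmat :: "real^'n^'m \<Rightarrow> real^'m^'m" where
  "Wmat H = mat 1 - H ** matrix_inv (transpose H ** H) ** transpose H"

definition Omega :: "real^'n^'m \<Rightarrow> real \<Rightarrow> real^'m^'m" where
  "Omega H \<sigma> = (\<chi> i j. if i \<noteq> j then 0
       else if \<not> full_col_rank (rowsel (- {i}) H) then 0
       else 1 / sqrt (\<sigma>\<^sup>2 * Wmat H $ i $ i))"

definition normres :: "real^'n^'m \<Rightarrow> real \<Rightarrow> real^'m \<Rightarrow> real^'m \<Rightarrow> real^'m" where
  "normres H \<sigma> z a = Omega H \<sigma> *v (Wmat H *v (z + a))"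

definition noise :: "real \<Rightarrow> ('m \<Rightarrow> real) measure" where
  "noise \<sigma> = PiM UNIV (\<lambda>_. density lborel (normal_density 0 \<sigma>))"

definition P1obj :: "real^'n^'m \<Rightarrow> real^'n \<Rightarrow> real \<Rightarrow> 'm set \<Rightarrow> real^'m \<Rightarrow> real" where
  "P1obj H x \<sigma> SF a =
     (\<integral>e. (\<Sum>i\<in>SF. (normres H \<sigma> (H *v x + (\<chi> k. e k)) a $ i)\<^sup>2) \<partial>noise \<sigma>)"

definition P1feasible :: "real^'n^'m \<Rightarrow> 'm set \<Rightarrow> 'm set \<Rightarrow> real^'m \<Rightarrow> bool" where
  "P1feasible H SA SF a \<longleftrightarrow> (norm a)\<^sup>2 = 1 \<and> a \<in> range (\<lambda>y. rowsel (- SF) H *v y)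
      \<and> (\<forall>i. i \<notin> SA \<longrightarrow> a $ i = 0)"

definition P1optimal :: "real^'n^'m \<Rightarrow> real^'n \<Rightarrow> real \<Rightarrow> 'm set \<Rightarrow> 'm set \<Rightarrow> real^'m \<Rightarrow> bool" where
  "P1optimal H x \<sigma> SA SF a \<longleftrightarrow> P1feasible H SA SF a \<and>
      (\<forall>a'. P1feasible H SA SF a' \<longrightarrow> P1obj H x \<sigma> SF a' \<le> P1obj H x \<sigma> SF a)"

end

theory Submission
  imports Defs
begin

(* Criticality makes the images H w that vanish on So - C collinear on So: if (H z)_c \<noteq> 0
   for some c \<in> C, then (H z)_c w - (H w)_c z is annihilated by the rows So - (C - {c}), which
   still observe nzcols H So, so H maps it to 0 on So.  Hypothesis (iii) provides z \<noteq> 0 with H z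
   supported on C, and observability with respect to So - C2 puts a nonzero entry of H z into C1.
   In the coordinates of the basis U_A, the null space of the reduced matrix is the preimage of
   this line, hence one-dimensional; and the feasible set of (P1) consists of the two unit vectors
   on the line spanned by H z restricted to C1, so an optimum exists whatever the objective is. *)

lemma rowsel_mult_nth:
  "(rowsel S H *v y) $ i = (if i \<in> S then (H *v y) $ i else 0)"
  by (simp add: rowsel_def matrix_vector_mult_def)

lemma column_rowsel: "column j (rowsel S U) = (\<chi> i. if i \<in> S then U $ i $ j else 0)"
  by (simp add: column_def rowsel_def vec_eq_iff)

lemma full_col_rank_mult_eq_0D:
  fixes H :: "real^'n^'m"
  assumes "full_col_rank H" "H *v w = 0"
  shows "w = 0"
proof -
  have "inj ((*v) H)"
    using assms(1) full_rank_injective unfolding full_col_rank_def by blast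
  then show ?thesis
    using assms(2) by (metis injD matrix_vector_mult_0_right)
qed

lemma not_full_col_rank_rowselE:
  fixes H :: "real^'n^'m"
  assumes "\<not> full_col_rank (rowsel (- C) H)"
  obtains z where "z \<noteq> 0" "\<And>i. i \<notin> C \<Longrightarrow> (H *v z) $ i = 0"
proof -
  obtain z where "z \<noteq> 0" "rowsel (- C) H *v z = 0"
    using assms matrix_nonfull_linear_equations_eq unfolding full_col_rank_def by blast
  then show ?thesis
    using that by (metis Compl_iff rowsel_mult_nth zero_index)
qed

lemma observable_nzcols_mult_eq_0:
  assumes "observable H S (nzcols H So)" "u \<in> nullsp H S" "i \<in> So"
  shows "(H *v u) $ i = 0"
proof -
  have "\<forall>j\<in>nzcols H So. u $ j = 0"
    using assms(1,2) unfolding observable_def by blast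
  moreover have "H $ i $ j = 0" if "j \<notin> nzcols H So" for j
    using that assms(3) unfolding nzcols_def by blast
  ultimately show ?thesis
    by (auto simp: matrix_vector_mult_def intro!: sum.neutral)
qed

lemma critical_observable_psubset:
  "critical H S X C \<Longrightarrow> C' \<subset> C \<Longrightarrow> observable H (S - C') X"
  unfolding critical_def by blast

lemma critical_mult_collinear:
  assumes crit: "critical H So (nzcols H So) C"
    and c: "c \<in> C" "(H *v z) $ c \<noteq> 0"
    and z: "\<forall>i\<in>So - C. (H *v z) $ i = 0"
    and w: "\<forall>i\<in>So - C. (H *v w) $ i = 0"
  shows "\<forall>i\<in>So. (H *v w) $ i = ((H *v w) $ c / (H *v z) $ c) * (H *v z) $ i"
proof
  fix i assume i: "i \<in> So"
  define u where "u = (H *v z) $ c *\<^sub>R w - (H *v w) $ c *\<^sub>R z"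
  have Hu: "(H *v u) $ k = (H *v z) $ c * (H *v w) $ k - (H *v w) $ c * (H *v z) $ k" for k
    by (simp add: u_def matrix_vector_mult_diff_distrib matrix_vector_mult_scaleR)
  have "u \<in> nullsp H (So - (C - {c}))"
  proof (unfold nullsp_def, intro CollectI ballI)
    fix k assume "k \<in> So - (C - {c})"
    then consider "k = c" | "k \<in> So - C" by blast
    then show "(H *v u) $ k = 0"
      by cases (use z w in \<open>simp_all add: Hu\<close>)
  qed
  moreover have "observable H (So - (C - {c})) (nzcols H So)"
    using crit c(1) by (intro critical_observable_psubset) auto
  ultimately have "(H *v u) $ i = 0"
    using i observable_nzcols_mult_eq_0 by blast
  then show "(H *v w) $ i = ((H *v w) $ c / (H *v z) $ c) * (H *v z) $ i"
    using Hu[of i] c(2) by (simp add: field_simps)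
qed

lemma observable_nonzero_mult_witness:
  fixes H :: "real^'n^'m"
  assumes "full_col_rank H" and obs: "observable H (So - C2) (nzcols H So)"
    and "C \<subseteq> So" "C2 \<subseteq> C"
    and z: "z \<noteq> 0" "\<And>i. i \<notin> C \<Longrightarrow> (H *v z) $ i = 0"
  obtains c where "c \<in> C - C2" "(H *v z) $ c \<noteq> 0"
proof -
  have "\<exists>c\<in>C - C2. (H *v z) $ c \<noteq> 0"
  proof (rule ccontr)
    assume "\<not> ?thesis"
    then have "z \<in> nullsp H (So - C2)"
      using z(2) by (auto simp: nullsp_def)
    then have "(H *v z) $ i = 0" for i
      using observable_nzcols_mult_eq_0[OF obs] z(2) \<open>C \<subseteq> So\<close> by (cases "i \<in> C") auto
    then have "z = 0"
      using \<open>full_col_rank H\<close> full_col_rank_mult_eq_0D by (metis vec_eq_iff zero_index)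
    then show False
      using z(1) by blast
  qed
  then show ?thesis
    using that by blast
qed

lemma mult_supported_eq_sum_columns:
  fixes A :: "real^'n^'m"
  assumes "\<forall>j. j \<notin> X \<longrightarrow> v $ j = 0"
  shows "A *v v = (\<Sum>j\<in>X. v $ j *\<^sub>R column j A)"
proof -
  have "A *v v = (\<Sum>j\<in>UNIV. v $ j *\<^sub>R column j A)"
    by (simp add: matrix_vector_mult_def column_def vec_eq_iff sum_component mult.commute)
  also have "\<dots> = (\<Sum>j\<in>X. v $ j *\<^sub>R column j A)"
    using assms by (intro sum.mono_neutral_right) auto
  finally show ?thesis .
qed

lemma independent_columns_mult_eq_0D:
  fixes A :: "real^'n^'m"
  assumes inj: "inj_on (\<lambda>j. column j A) X"
    and ind: "independent ((\<lambda>j. column j A) ` X)"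
    and v: "\<forall>j. j \<notin> X \<longrightarrow> v $ j = 0" and "A *v v = 0"
  shows "v = 0"
proof -
  let ?c = "\<lambda>b. v $ inv_into X (\<lambda>j. column j A) b"
  have "(\<Sum>b\<in>(\<lambda>j. column j A) ` X. ?c b *\<^sub>R b) = (\<Sum>j\<in>X. v $ j *\<^sub>R column j A)"
    by (auto simp: sum.reindex[OF inj] inv_into_f_f[OF inj] intro!: sum.cong)
  also have "\<dots> = 0"
    using mult_supported_eq_sum_columns[OF v, of A] \<open>A *v v = 0\<close> by simp
  finally have "\<forall>b\<in>(\<lambda>j. column j A) ` X. ?c b = 0"
    using ind unfolding independent_explicit by (elim conjE allE[where x = ?c] mp)
  then have "\<forall>j\<in>X. v $ j = 0"
    by (simp add: inv_into_f_f[OF inj])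
  then show ?thesis
    using v by (metis vec_eq_iff zero_index)
qed

lemma span_columns_obtain_supported:
  fixes A :: "real^'n^'m"
  assumes inj: "inj_on (\<lambda>j. column j A) X"
    and "y \<in> span ((\<lambda>j. column j A) ` X)"
  obtains v where "\<forall>j. j \<notin> X \<longrightarrow> v $ j = 0" "A *v v = y"
proof -
  obtain u where u: "y = (\<Sum>b\<in>(\<lambda>j. column j A) ` X. u b *\<^sub>R b)"
    using assms(2) span_finite[of "(\<lambda>j. column j A) ` X"] by auto
  define v :: "real^'n" where "v = (\<chi> j. if j \<in> X then u (column j A) else 0)"
  have supp: "\<forall>j. j \<notin> X \<longrightarrow> v $ j = 0"
    by (simp add: v_def)
  have "A *v v = (\<Sum>j\<in>X. u (column j A) *\<^sub>R column j A)"
    using mult_supported_eq_sum_columns[OF supp] by (simp add: v_def)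
  also have "\<dots> = y"
    by (simp add: u sum.reindex[OF inj])
  finally show ?thesis
    using that supp by blast
qed

lemma mult_supported_in_span_columns:
  fixes A :: "real^'n^'m"
  assumes "\<forall>j. j \<notin> X \<longrightarrow> v $ j = 0"
  shows "A *v v \<in> span ((\<lambda>j. column j A) ` X)"
  unfolding mult_supported_eq_sum_columns[OF assms]
  by (intro span_sum span_scale span_base) auto

lemma critical_null_space_line:
  fixes H U :: "real^'n^'m"
  assumes crit: "critical H So (nzcols H So) C"
    and c: "c \<in> C" "c \<in> S" "(H *v z) $ c \<noteq> 0"
    and z: "\<And>i. i \<notin> C \<Longrightarrow> (H *v z) $ i = 0"
    and S: "So - C \<subseteq> S" "S \<subseteq> So"
    and inj: "inj_on (\<lambda>j. column j (rowsel S U)) X"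
    and ind: "independent ((\<lambda>j. column j (rowsel S U)) ` X)"
    and span: "span ((\<lambda>j. column j (rowsel S U)) ` X) = range (\<lambda>y. rowsel S H *v y)"
  obtains v0 where "v0 \<noteq> 0" "\<forall>i\<in>S. (U *v v0) $ i = (H *v z) $ i"
    "{v. (\<forall>j. j \<notin> X \<longrightarrow> v $ j = 0) \<and> (\<forall>i \<in> So - C. (U *v v) $ i = 0)} = span {v0}"
proof -
  let ?V = "{v. (\<forall>j. j \<notin> X \<longrightarrow> v $ j = 0) \<and> (\<forall>i \<in> So - C. (U *v v) $ i = 0)}"
  obtain v0 where v0: "\<forall>j. j \<notin> X \<longrightarrow> v0 $ j = 0" "rowsel S U *v v0 = rowsel S H *v z"
    using span_columns_obtain_supported[OF inj] span by blast
  have U_v0: "(U *v v0) $ i = (H *v z) $ i" if "i \<in> S" for i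
    using arg_cong[OF v0(2), of "\<lambda>u. u $ i"] that by (simp add: rowsel_mult_nth)
  have "?V \<subseteq> span {v0}"
  proof
    fix v assume "v \<in> ?V"
    then have v: "\<forall>j. j \<notin> X \<longrightarrow> v $ j = 0" "\<forall>i \<in> So - C. (U *v v) $ i = 0"
      by auto
    obtain y where y: "rowsel S U *v v = rowsel S H *v y"
      using mult_supported_in_span_columns[OF v(1), of "rowsel S U"] span by auto
    have "\<forall>i\<in>So - C. (H *v y) $ i = 0"
      using v(2) S(1) y by (metis rowsel_mult_nth subsetD)
    then obtain t where t: "\<forall>i\<in>So. (H *v y) $ i = t * (H *v z) $ i"
      using critical_mult_collinear[OF crit c(1,3)] z by blast
    have "rowsel S U *v v = rowsel S U *v (t *\<^sub>R v0)"
      using t S(2) by (auto simp: y v0(2) matrix_vector_mult_scaleR vec_eq_iff rowsel_mult_nth)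
    then have "rowsel S U *v (v - t *\<^sub>R v0) = 0"
      by (simp add: matrix_vector_mult_diff_distrib)
    then have "v - t *\<^sub>R v0 = 0"
      using v(1) v0(1) by (intro independent_columns_mult_eq_0D[OF inj ind]) auto
    then show "v \<in> span {v0}"
      by (auto simp: span_singleton)
  qed
  moreover have "v0 \<in> ?V"
    using v0(1) U_v0 S(1) z by auto
  then have "span {v0} \<subseteq> ?V"
    by (auto simp: span_singleton matrix_vector_mult_scaleR)
  moreover have "v0 \<noteq> 0"
    using U_v0[OF c(2)] c(3) by auto
  ultimately show ?thesis
    using that U_v0 by blast
qed

lemma critical_attack_directions:
  fixes H :: "real^'n^'m"
  assumes crit: "critical H So (nzcols H So) C"
    and c: "c \<in> C" "(H *v z) $ c \<noteq> 0"
    and z: "\<And>i. i \<notin> C \<Longrightarrow> (H *v z) $ i = 0"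
    and part: "C1 \<union> C2 = C" "C1 \<inter> C2 = {}"
  shows "a \<in> range (\<lambda>y. rowsel (- C2) H *v y) \<and> (\<forall>i. i \<notin> C1 \<longrightarrow> a $ i = 0)
     \<longleftrightarrow> (\<exists>t. a = t *\<^sub>R (rowsel (- C2) H *v z))"
proof
  assume "a \<in> range (\<lambda>y. rowsel (- C2) H *v y) \<and> (\<forall>i. i \<notin> C1 \<longrightarrow> a $ i = 0)"
  then obtain w where w: "a = rowsel (- C2) H *v w" and a: "\<forall>i. i \<notin> C1 \<longrightarrow> a $ i = 0"
    by blast
  have "\<forall>i\<in>So - C. (H *v w) $ i = 0"
    using a part by (auto simp: w rowsel_mult_nth)
  then obtain t where t: "\<forall>i\<in>So. (H *v w) $ i = t * (H *v z) $ i"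
    using critical_mult_collinear[OF crit c] z by blast
  have "C \<subseteq> So"
    using crit by (simp add: critical_def)
  then have "a $ i = t * (rowsel (- C2) H *v z) $ i" for i
    using a t z part by (cases "i \<in> C1"; cases "i \<in> C2") (auto simp: w rowsel_mult_nth)
  then show "\<exists>t. a = t *\<^sub>R (rowsel (- C2) H *v z)"
    by (auto simp: vec_eq_iff)
next
  assume "\<exists>t. a = t *\<^sub>R (rowsel (- C2) H *v z)"
  then obtain t where t: "a = rowsel (- C2) H *v (t *\<^sub>R z)"
    by (auto simp: matrix_vector_mult_scaleR)
  have "a $ i = 0" if "i \<notin> C1" for i
    using that z part by (cases "i \<in> C2") (auto simp: t rowsel_mult_nth matrix_vector_mult_scaleR)
  then show "a \<in> range (\<lambda>y. rowsel (- C2) H *v y) \<and> (\<forall>i. i \<notin> C1 \<longrightarrow> a $ i = 0)"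
    using t by blast
qed

lemma unit_multiple_iff_sgn:
  fixes u :: "'a::real_normed_vector"
  assumes "u \<noteq> 0"
  shows "(norm a)\<^sup>2 = 1 \<and> (\<exists>t. a = t *\<^sub>R u) \<longleftrightarrow> a = sgn u \<or> a = - sgn u"
proof
  assume unit_line: "(norm a)\<^sup>2 = 1 \<and> (\<exists>t. a = t *\<^sub>R u)"
  then obtain t where a: "a = t *\<^sub>R u"
    by blast
  have "norm a = 1"
    using unit_line norm_ge_zero[of a] by (auto simp: power2_eq_1_iff)
  then have "\<bar>t\<bar> * norm u = 1"
    by (simp add: a)
  then have "t = 1 / norm u \<or> t = - (1 / norm u)"
    using assms by (auto simp: field_simps abs_if split: if_splits)
  then show "a = sgn u \<or> a = - sgn u"
    by (auto simp: a sgn_div_norm divide_inverse_commute)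
next
  assume "a = sgn u \<or> a = - sgn u"
  then show "(norm a)\<^sup>2 = 1 \<and> (\<exists>t. a = t *\<^sub>R u)"
    using assms by (auto simp: norm_sgn sgn_div_norm intro: exI[of _ "- inverse (norm u)"])
qed

lemma critical_P1feasible_iff:
  fixes H :: "real^'n^'m"
  assumes crit: "critical H So (nzcols H So) C"
    and c: "c \<in> C1" "(H *v z) $ c \<noteq> 0"
    and z: "\<And>i. i \<notin> C \<Longrightarrow> (H *v z) $ i = 0"
    and part: "C1 \<union> C2 = C" "C1 \<inter> C2 = {}"
  shows "P1feasible H C1 C2 a \<longleftrightarrow>
    a = sgn (rowsel (- C2) H *v z) \<or> a = - sgn (rowsel (- C2) H *v z)"
proof -
  have "c \<in> C" "c \<notin> C2"
    using c(1) part by auto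
  then have "rowsel (- C2) H *v z \<noteq> 0"
    using c(2) by (metis ComplI rowsel_mult_nth zero_index)
  note line = unit_multiple_iff_sgn[OF this]
  have "a \<in> range (\<lambda>y. rowsel (- C2) H *v y) \<and> (\<forall>i. i \<notin> C1 \<longrightarrow> a $ i = 0)
      \<longleftrightarrow> (\<exists>t. a = t *\<^sub>R (rowsel (- C2) H *v z))" for a
    using critical_attack_directions[OF crit \<open>c \<in> C\<close> c(2)] z part by blast
  then show ?thesis
    unfolding P1feasible_def line[symmetric] by blast
qed

lemma P1optimal_exists_if_feasible_pm:
  assumes "\<And>a. P1feasible H SA SF a \<longleftrightarrow> a = a0 \<or> a = - a0"
  obtains astar where "P1optimal H x \<sigma> SA SF astar" "astar = a0 \<or> astar = - a0"
proof (cases "P1obj H x \<sigma> SF (- a0) \<le> P1obj H x \<sigma> SF a0")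
  case True
  then show thesis
    using that[of a0] assms by (auto simp: P1optimal_def)
next
  case False
  then show thesis
    using that[of "- a0"] assms by (auto simp: P1optimal_def)
qed

lemma P1optimal_scaled_exists:
  assumes feasible: "\<And>a. P1feasible H SA SF a \<longleftrightarrow> a = sgn u \<or> a = - sgn u" and "t \<noteq> 0"
  shows "\<exists>\<alpha> astar. \<alpha> \<noteq> 0 \<and> P1optimal H x \<sigma> SA SF astar \<and> t *\<^sub>R u = \<alpha> *\<^sub>R astar"
proof -
  have "u \<noteq> 0"
    using feasible[of "sgn u"] by (auto simp: P1feasible_def)
  then have scale: "t *\<^sub>R u = (t * norm u) *\<^sub>R sgn u" "t * norm u \<noteq> 0"
    using \<open>t \<noteq> 0\<close> by (simp_all add: sgn_div_norm)
  obtain astar where opt: "P1optimal H x \<sigma> SA SF astar" and "astar = sgn u \<or> astar = - sgn u"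
    using P1optimal_exists_if_feasible_pm[OF feasible] by blast
  then show ?thesis
  proof (elim disjE)
    assume "astar = sgn u"
    then show ?thesis
      using opt scale by blast
  next
    assume "astar = - sgn u"
    then have "t *\<^sub>R u = (- (t * norm u)) *\<^sub>R astar"
      using scale by simp
    then show ?thesis
      using opt scale by (metis neg_equal_0_iff_equal)
  qed
qed

theorem theorem5:
  fixes H :: "real^'n^'m" and So C C1 C2 :: "'m set"
    and U :: "real^'n^'m" and x :: "real^'n" and \<sigma> :: real
  assumes fullrank: "full_col_rank H"
    and obs: "observable H So (nzcols H So)"
    and crit: "critical H So (nzcols H So) C"
    and notfull: "\<not> full_col_rank (rowsel (- C) H)"
    and part: "C1 \<union> C2 = C" "C1 \<inter> C2 = {}" "C1 \<noteq> {}" "C2 \<noteq> {}"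
    and UA_basis:
      "inj_on (\<lambda>j. \<chi> i. if i \<in> So - C2 then U $ i $ j else 0) (nzcols H So)"
      "independent ((\<lambda>j. \<chi> i. if i \<in> So - C2 then U $ i $ j else 0) ` nzcols H So)"
      "span ((\<lambda>j. \<chi> i. if i \<in> So - C2 then U $ i $ j else 0) ` nzcols H So)
         = range (\<lambda>y. rowsel (So - C2) H *v y)"
    and sigma_pos: "\<sigma> > 0"
  shows "dim {v :: real^'n. (\<forall>j. j \<notin> nzcols H So \<longrightarrow> v $ j = 0)
                 \<and> (\<forall>i \<in> So - C2 - C1. (U *v v) $ i = 0)} = 1
    \<and> (\<forall>v :: real^'n. v \<noteq> 0 \<longrightarrow> (\<forall>j. j \<notin> nzcols H So \<longrightarrow> v $ j = 0)
          \<longrightarrow> (\<forall>i \<in> So - C2 - C1. (U *v v) $ i = 0)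
          \<longrightarrow> (\<exists>\<alpha> astar. \<alpha> \<noteq> 0 \<and> P1optimal H x \<sigma> C1 C2 astar
                 \<and> (\<chi> i. if i \<in> C1 then (U *v v) $ i else 0) = \<alpha> *\<^sub>R astar))"
proof -
  have CSo: "C \<subseteq> So" and C2C: "C2 \<subset> C" and C1: "C1 = C - C2" "So - C2 - C1 = So - C"
    using crit part by (auto simp: critical_def)
  obtain z where z: "z \<noteq> 0" "\<And>i. i \<notin> C \<Longrightarrow> (H *v z) $ i = 0"
    using not_full_col_rank_rowselE[OF notfull] by blast
  obtain c where c: "c \<in> C1" "(H *v z) $ c \<noteq> 0"
    using observable_nonzero_mult_witness[OF fullrank critical_observable_psubset[OF crit C2C] CSo]
      C2C z C1(1) by blast
  obtain v0 where v0: "v0 \<noteq> 0" "\<forall>i\<in>So - C2. (U *v v0) $ i = (H *v z) $ i"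
    and V: "{v. (\<forall>j. j \<notin> nzcols H So \<longrightarrow> v $ j = 0) \<and> (\<forall>i \<in> So - C2 - C1. (U *v v) $ i = 0)}
      = span {v0}"
    by (rule critical_null_space_line[OF crit _ _ c(2) z(2) _ _ UA_basis[folded column_rowsel]])
      (use c C1 C2C CSo in auto)
  have restrict: "(\<chi> i. if i \<in> C1 then (U *v (t *\<^sub>R v0)) $ i else 0) = t *\<^sub>R (rowsel (- C2) H *v z)"
    for t
    using v0(2) z(2) part CSo by (auto simp: vec_eq_iff rowsel_mult_nth matrix_vector_mult_scaleR)
  show ?thesis
  proof (intro conjI allI impI)
    show "dim {v. (\<forall>j. j \<notin> nzcols H So \<longrightarrow> v $ j = 0) \<and> (\<forall>i \<in> So - C2 - C1. (U *v v) $ i = 0)} = 1"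
      unfolding V using v0(1) by (simp add: dim_span)
    fix v :: "real^'n"
    assume "v \<noteq> 0" "\<forall>j. j \<notin> nzcols H So \<longrightarrow> v $ j = 0" "\<forall>i \<in> So - C2 - C1. (U *v v) $ i = 0"
    then have "v \<in> span {v0}"
      using V by blast
    then obtain t where t: "v = t *\<^sub>R v0" "t \<noteq> 0"
      using \<open>v \<noteq> 0\<close> by (auto simp: span_singleton)
    show "\<exists>\<alpha> astar. \<alpha> \<noteq> 0 \<and> P1optimal H x \<sigma> C1 C2 astar
                 \<and> (\<chi> i. if i \<in> C1 then (U *v v) $ i else 0) = \<alpha> *\<^sub>R astar"
      unfolding t(1) restrict
      using P1optimal_scaled_exists[OF critical_P1feasible_iff[OF crit c z(2) part(1,2)] t(2)] .
  qed
qed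

end
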